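(* Let $R$ be a commutative domain with unit, let $f\in R$ be nonzero and non-invertible, and let $S=R[u,v]/(uv-f)$ (a domain). Denote by $R[u]$ and $R[v]$ the subrings of $S$ generated by $R$ and $u$, resp. by $R$ and $v$. Let $\phi\in\operatorname{Frac}(S)$ and suppose there exist $d\in\mathbb{Z}_{\ge 0}$, $g\in R[u]$ and $h\in R[v]$ such that $\phi=\frac{g}{u^d}=\frac{h}{v^d}$. Then $\phi\in S$. *)

theory Defs
  imports "HOL-Computational_Algebra.Polynomial"
begin

text \<open>The polynomial ring R[u,v] is modelled as ('a poly) poly:
  the outer variable is v, the inner variable (in the coefficients) is u.
  S = R[u,v]/(uv - f); elements of S are represented by polynomials, and
  equality in S is congruence modulo the principal ideal (uv - f).\<close>

definition var_u :: "'a::comm_ring_1 poly poly" where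
  "var_u = [:[:0, 1:]:]"

definition var_v :: "'a::comm_ring_1 poly poly" where
  "var_v = [:0, 1:]"

definition uv_rel :: "'a::comm_ring_1 \<Rightarrow> 'a poly poly" where
  "uv_rel f = var_u * var_v - [:[:f:]:]"

definition eqS :: "'a::comm_ring_1 \<Rightarrow> 'a poly poly \<Rightarrow> 'a poly poly \<Rightarrow> bool" where
  "eqS f p q \<longleftrightarrow> uv_rel f dvd (p - q)"

definition in_u :: "'a::comm_ring_1 poly \<Rightarrow> 'a poly poly" where
  "in_u g = [:g:]"

definition in_v :: "'a::comm_ring_1 poly \<Rightarrow> 'a poly poly" where
  "in_v h = map_poly (\<lambda>c. [:c:]) h"

end

theory Submission
  imports Defs
begin

text \<open>The hypothesis says that \<open>v\<^sup>d g\<close> lies in the ideal \<open>u\<^sup>d S\<close>, so it suffices that \<open>v\<close> is a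
  nonzerodivisor on \<open>S/u\<^sup>d S\<close>. Suppose \<open>v p - s u\<^sup>d = (uv - f) q\<close> and split off the \<open>v\<close>-free
  parts \<open>s = s\<^sub>0 + v s'\<close>, \<open>q = q\<^sub>0 + v q'\<close>. The \<open>v\<close>-free part of the identity is
  \<open>f q\<^sub>0 = s\<^sub>0 u\<^sup>d\<close> in \<open>R[u]\<close>; as \<open>f \<noteq> 0\<close> this forces \<open>q\<^sub>0 = u\<^sup>d t\<close>, and the rest of the identity,
  divided by \<open>v\<close>, reads \<open>p - s' u\<^sup>d = (uv - f) q' + u\<^sup>d u t\<close>.\<close>

lemma monom_1_dvd_smult_iff:
  fixes c :: "'a::idom"
  assumes "c \<noteq> 0"
  shows "monom 1 n dvd smult c p \<longleftrightarrow> monom 1 n dvd p"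
  using assms by (simp add: monom_1_dvd_iff')

lemma var_u_power: "var_u ^ d = [:monom 1 d:]"
  by (simp add: var_u_def poly_const_pow monom_altdef)

lemma var_u_power_multiple_cancel_var_v:
  fixes f :: "'a::idom"
  assumes "f \<noteq> 0" and "eqS f (var_v * p) (s * var_u ^ d)"
  shows "\<exists>s'. eqS f p (s' * var_u ^ d)"
proof -
  obtain q where q: "var_v * p - s * var_u ^ d = uv_rel f * q"
    using assms(2) unfolding eqS_def by (elim dvdE)
  obtain s0 s' where s: "s = pCons s0 s'"
    by (cases s)
  obtain q0 q' where q_pCons: "q = pCons q0 q'"
    by (cases q)
  have "pCons (- (monom 1 d * s0)) (p - s' * var_u ^ d) = var_v * p - s * var_u ^ d"
    by (simp add: s var_v_def var_u_power mult.commute)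
  also have "\<dots> = uv_rel f * q"
    by (rule q)
  also have "\<dots> = pCons (- smult f q0) (uv_rel f * q' + var_u * [:q0:])"
    by (simp add: q_pCons var_v_def var_u_def uv_rel_def algebra_simps)
  finally have free_part: "smult f q0 = monom 1 d * s0"
    and rest: "p - s' * var_u ^ d = uv_rel f * q' + var_u * [:q0:]"
    by simp_all
  obtain t where t: "q0 = monom 1 d * t"
    using free_part assms(1) by (metis dvd_triv_left monom_1_dvd_smult_iff dvdE)
  have "p - (s' + var_u * [:t:]) * var_u ^ d = uv_rel f * q'"
    using rest by (simp add: t var_u_power smult_add_right algebra_simps)
  then show ?thesis
    unfolding eqS_def by (metis dvd_triv_left)
qed

lemma var_u_power_multiple_cancel_var_v_power:
  fixes f :: "'a::idom"
  assumes "f \<noteq> 0" and "eqS f (var_v ^ n * p) (s * var_u ^ d)"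
  shows "\<exists>s'. eqS f p (s' * var_u ^ d)"
  using assms(2)
proof (induction n arbitrary: p s)
  case 0
  then show ?case by auto
next
  case (Suc n)
  then obtain s' where "eqS f (var_v * p) (s' * var_u ^ d)"
    by (metis mult.assoc power_Suc2)
  then show ?case
    using assms(1) var_u_power_multiple_cancel_var_v by blast
qed

theorem lemma1p8:
  fixes f :: "'a::idom" and g h :: "'a poly" and d :: nat
  assumes "f \<noteq> 0" and "\<not> f dvd 1"
    and "eqS f (in_u g * var_v ^ d) (in_v h * var_u ^ d)"
  shows "\<exists>s :: 'a poly poly. eqS f (in_u g) (s * var_u ^ d)"
  using var_u_power_multiple_cancel_var_v_power[OF assms(1)] assms(3)
  by (metis mult.commute)

end
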